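(* There is an absolute constant $C>0$ such that the following holds. Let $\varepsilon>0$, let $f:\mathbb R\to\mathbb R$ be $1$-smooth, and let $x_-<x_+$ satisfy $f'(x_-)\le-\varepsilon$ and $f(x_+)\ge f(x_-)$. Then BinarySearchIII$(x_-,x_+)$ terminates and outputs an $\varepsilon$-stationary point of $f$ using at most $C\bigl(1+\max\{0,\log\frac{x_+-x_-}{\varepsilon}\}\bigr)$ oracle queries.
   Context: $f:\mathbb R\to\mathbb R$ is $1$-smooth if it is continuously differentiable and $f'$ is $1$-Lipschitz; $x$ is an $\varepsilon$-stationary point if $|f'(x)|<\varepsilon$. The oracle returns $(f(x),f'(x))$ on query $x$; values at already-queried points (including $x_\pm$) are reused. Subroutines (a recursive call's output is returned unchanged): BinarySearch$(x_0,x_1)$: $m=(x_0+x_1)/2$; if $|f'(m)|<\varepsilon$ return $m$; if $f'(m)\le-\varepsilon$ return BinarySearch$(m,x_1)$; if $f'(m)>0$ return BinarySearch$(x_0,m)$. BinarySearchIII$(x_-,x_+)$: $m=(x_-+x_+)/2$; if $|f'(m)|<\varepsilon$ return $m$; else if $f'(m)>0$ return BinarySearch$(x_-,m)$; else if $f(m)\ge f(x_-)$ return BinarySearchIII$(x_-,m)$; else return BinarySearchIII$(m,x_+)$. *)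

theory Defs
  imports Complex_Main
begin

definition one_smooth :: "(real \<Rightarrow> real) \<Rightarrow> (real \<Rightarrow> real) \<Rightarrow> bool" where
  "one_smooth f f' \<longleftrightarrow> (\<forall>x. (f has_real_derivative f' x) (at x)) \<and>
     (\<forall>x y. \<bar>f' x - f' y\<bar> \<le> \<bar>x - y\<bar>)"

text \<open>bsearch f' eps x0 x1 r k: BinarySearch(x0,x1) terminates, returns r, and
  makes k oracle queries (one per midpoint evaluated).\<close>
inductive bsearch :: "(real \<Rightarrow> real) \<Rightarrow> real \<Rightarrow> real \<Rightarrow> real \<Rightarrow> real \<Rightarrow> nat \<Rightarrow> bool"
  for f' :: "real \<Rightarrow> real" and eps :: real where
  bs_found: "m = (x0 + x1) / 2 \<Longrightarrow> \<bar>f' m\<bar> < eps \<Longrightarrow> bsearch f' eps x0 x1 m 1"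
| bs_right: "m = (x0 + x1) / 2 \<Longrightarrow> \<not> \<bar>f' m\<bar> < eps \<Longrightarrow> f' m \<le> - eps \<Longrightarrow>
    bsearch f' eps m x1 r k \<Longrightarrow> bsearch f' eps x0 x1 r (Suc k)"
| bs_left: "m = (x0 + x1) / 2 \<Longrightarrow> \<not> \<bar>f' m\<bar> < eps \<Longrightarrow> \<not> f' m \<le> - eps \<Longrightarrow> f' m > 0 \<Longrightarrow>
    bsearch f' eps x0 m r k \<Longrightarrow> bsearch f' eps x0 x1 r (Suc k)"

text \<open>bsearch3 f f' eps xm xp r k: BinarySearchIII(xm,xp) terminates, returns r,
  with k oracle queries in total (including those of the nested BinarySearch).\<close>
inductive bsearch3 :: "(real \<Rightarrow> real) \<Rightarrow> (real \<Rightarrow> real) \<Rightarrow> real \<Rightarrow> real \<Rightarrow> real \<Rightarrow> real \<Rightarrow> nat \<Rightarrow> bool"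
  for f :: "real \<Rightarrow> real" and f' :: "real \<Rightarrow> real" and eps :: real where
  bs3_found: "m = (xm + xp) / 2 \<Longrightarrow> \<bar>f' m\<bar> < eps \<Longrightarrow> bsearch3 f f' eps xm xp m 1"
| bs3_bs: "m = (xm + xp) / 2 \<Longrightarrow> \<not> \<bar>f' m\<bar> < eps \<Longrightarrow> f' m > 0 \<Longrightarrow>
    bsearch f' eps xm m r k \<Longrightarrow> bsearch3 f f' eps xm xp r (Suc k)"
| bs3_left: "m = (xm + xp) / 2 \<Longrightarrow> \<not> \<bar>f' m\<bar> < eps \<Longrightarrow> \<not> f' m > 0 \<Longrightarrow> f m \<ge> f xm \<Longrightarrow>
    bsearch3 f f' eps xm m r k \<Longrightarrow> bsearch3 f f' eps xm xp r (Suc k)"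
| bs3_right: "m = (xm + xp) / 2 \<Longrightarrow> \<not> \<bar>f' m\<bar> < eps \<Longrightarrow> \<not> f' m > 0 \<Longrightarrow> \<not> f m \<ge> f xm \<Longrightarrow>
    bsearch3 f f' eps m xp r k \<Longrightarrow> bsearch3 f f' eps xm xp r (Suc k)"

end

theory Submission
  imports Defs
begin

text \<open>Both searches maintain an interval on which the midpoint rule keeps an
  \<open>\<epsilon>\<close>-stationary point trapped: a \<^emph>\<open>gradient bracket\<close> (\<open>f' \<le> -\<epsilon>\<close> on the left,
  \<open>f' \<ge> \<epsilon>\<close> on the right) for BinarySearch, a \<^emph>\<open>descent bracket\<close> (\<open>f' \<le> -\<epsilon>\<close> on
  the left, no lower value on the right) for BinarySearchIII.  Each query either
  succeeds or halves the bracket, and 1-smoothness forces every bracket to have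
  width at least \<open>2\<epsilon>\<close>; so after about \<open>log\<^sub>2((x\<^sub>+ - x\<^sub>-)/\<epsilon>)\<close> halvings the midpoint
  must be \<open>\<epsilon>\<close>-stationary.\<close>

definition gradient_bracket :: "(real \<Rightarrow> real) \<Rightarrow> real \<Rightarrow> real \<Rightarrow> real \<Rightarrow> bool" where
  "gradient_bracket f' eps a b \<longleftrightarrow> a < b \<and> f' a \<le> - eps \<and> f' b \<ge> eps"

definition descent_bracket ::
    "(real \<Rightarrow> real) \<Rightarrow> (real \<Rightarrow> real) \<Rightarrow> real \<Rightarrow> real \<Rightarrow> real \<Rightarrow> bool" where
  "descent_bracket f f' eps a b \<longleftrightarrow> a < b \<and> f' a \<le> - eps \<and> f a \<le> f b"

lemma one_smooth_deriv_lipschitz: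
  "one_smooth f f' \<Longrightarrow> \<bar>f' x - f' y\<bar> \<le> \<bar>x - y\<bar>"
  unfolding one_smooth_def by blast

lemma gradient_bracket_width_ge:
  assumes "\<And>x y. \<bar>f' x - f' y\<bar> \<le> \<bar>x - y\<bar>" and "gradient_bracket f' eps a b"
  shows "b - a \<ge> 2 * eps"
  using assms(1)[of b a] assms(2) unfolding gradient_bracket_def by linarith

text \<open>On \<open>[a, b]\<close> the Lipschitz bound gives \<open>f' x \<le> -\<epsilon> + (x - a)\<close>, so
  \<open>f x - f a \<le> -\<epsilon> (x - a) + (x - a)\<^sup>2 / 2\<close>, which is negative for \<open>0 < x - a < 2\<epsilon>\<close>.\<close>
lemma descent_bracket_width_ge:
  assumes smooth: "one_smooth f f'" and bracket: "descent_bracket f f' eps a b"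
  shows "b - a \<ge> 2 * eps"
proof -
  define g where "g x = f x - f a + eps * (x - a) - (x - a)\<^sup>2 / 2" for x
  have f_deriv: "(f has_real_derivative f' x) (at x)" for x
    using smooth unfolding one_smooth_def by blast
  have "g b \<le> g a"
  proof (rule DERIV_nonpos_imp_nonincreasing[of a b g])
    show "a \<le> b" using bracket unfolding descent_bracket_def by simp
    fix x assume "a \<le> x" "x \<le> b"
    have "(g has_real_derivative f' x + eps - (x - a)) (at x)"
      unfolding g_def by (auto intro!: derivative_eq_intros f_deriv simp: field_simps)
    moreover have "f' x + eps - (x - a) \<le> 0"
      using one_smooth_deriv_lipschitz[OF smooth, of x a] \<open>a \<le> x\<close> bracket
      unfolding descent_bracket_def by linarith
    ultimately show "\<exists>y. (g has_real_derivative y) (at x) \<and> y \<le> 0" by blast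
  qed
  then have "eps * (b - a) \<le> (b - a)\<^sup>2 / 2"
    using bracket unfolding g_def descent_bracket_def by simp
  then have "2 * eps * (b - a) \<le> (b - a) * (b - a)"
    by (simp add: power2_eq_square)
  moreover have "b - a > 0" using bracket unfolding descent_bracket_def by simp
  ultimately show ?thesis by simp
qed

lemma gradient_bracket_halve:
  assumes bracket: "gradient_bracket f' eps a b" and miss: "\<not> \<bar>f' ((a + b) / 2)\<bar> < eps"
  obtains c d where "gradient_bracket f' eps c d" "d - c = (b - a) / 2"
    "\<And>r k. bsearch f' eps c d r k \<Longrightarrow> bsearch f' eps a b r (Suc k)"
proof (cases "f' ((a + b) / 2) \<le> - eps")
  case True
  show thesis
  proof
    show "gradient_bracket f' eps ((a + b) / 2) b"
      using bracket True unfolding gradient_bracket_def by simp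
    show "b - (a + b) / 2 = (b - a) / 2" by (simp add: field_simps)
  qed (rule bs_right[where f'=f', OF refl miss True])
next
  case False
  then have "f' ((a + b) / 2) > 0" "f' ((a + b) / 2) \<ge> eps" using miss by auto
  show thesis
  proof
    show "gradient_bracket f' eps a ((a + b) / 2)"
      using bracket \<open>f' ((a + b) / 2) \<ge> eps\<close> unfolding gradient_bracket_def by simp
    show "(a + b) / 2 - a = (b - a) / 2" by (simp add: field_simps)
  qed (rule bs_left[where f'=f', OF refl miss False \<open>f' ((a + b) / 2) > 0\<close>])
qed

lemma descent_bracket_halve:
  assumes bracket: "descent_bracket f f' eps a b" and miss: "\<not> \<bar>f' ((a + b) / 2)\<bar> < eps"
  obtains (gradient) c d where "gradient_bracket f' eps c d" "d - c = (b - a) / 2"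
      "\<And>r k. bsearch f' eps c d r k \<Longrightarrow> bsearch3 f f' eps a b r (Suc k)"
    | (descent) c d where "descent_bracket f f' eps c d" "d - c = (b - a) / 2"
      "\<And>r k. bsearch3 f f' eps c d r k \<Longrightarrow> bsearch3 f f' eps a b r (Suc k)"
proof -
  define m where "m = (a + b) / 2"
  have left_width: "m - a = (b - a) / 2" and right_width: "b - m = (b - a) / 2"
    unfolding m_def by (simp_all add: field_simps)
  have miss_m: "\<not> \<bar>f' m\<bar> < eps" using miss unfolding m_def .
  consider "f' m > 0" | "\<not> f' m > 0" "f m \<ge> f a" | "\<not> f' m > 0" "\<not> f m \<ge> f a"
    by blast
  then show thesis
  proof cases
    case 1
    then have "gradient_bracket f' eps a m"
      using bracket miss_m left_width unfolding gradient_bracket_def descent_bracket_def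
      by auto
    from this left_width show thesis
      by (rule gradient) (rule bs3_bs[where f=f and f'=f', OF m_def miss_m 1])
  next
    case 2
    then have "descent_bracket f f' eps a m"
      using bracket left_width unfolding descent_bracket_def by auto
    from this left_width show thesis
      by (rule descent) (rule bs3_left[where f=f and f'=f', OF m_def miss_m 2])
  next
    case 3
    then have "descent_bracket f f' eps m b"
      using bracket miss_m right_width unfolding descent_bracket_def by auto
    from this right_width show thesis
      by (rule descent) (rule bs3_right[where f=f and f'=f', OF m_def miss_m 3])
  qed
qed

lemma bsearch_succeeds:
  assumes smooth: "one_smooth f f'"
    and "gradient_bracket f' eps a b" and "b - a \<le> 2 * eps * 2 ^ n"
  shows "\<exists>r k. bsearch f' eps a b r k \<and> \<bar>f' r\<bar> < eps \<and> k \<le> n + 1"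
  using assms(2,3)
proof (induction n arbitrary: a b)
  case (0 a b)
  have "\<bar>f' ((a + b) / 2)\<bar> < eps"
  proof (rule ccontr)
    assume "\<not> \<bar>f' ((a + b) / 2)\<bar> < eps"
    with "0.prems"(1) obtain c d where "gradient_bracket f' eps c d" "d - c = (b - a) / 2"
      by (rule gradient_bracket_halve)
    with gradient_bracket_width_ge[OF one_smooth_deriv_lipschitz[OF smooth]] "0.prems"(2)
    show False unfolding gradient_bracket_def by fastforce
  qed
  then show ?case using bs_found[where f'=f' and eps=eps, OF refl] by fastforce
next
  case (Suc n a b)
  show ?case
  proof (cases "\<bar>f' ((a + b) / 2)\<bar> < eps")
    case True
    then show ?thesis using bs_found[where f'=f' and eps=eps, OF refl] by fastforce
  next
    case False
    with Suc.prems(1) obtain c d where "gradient_bracket f' eps c d" "d - c = (b - a) / 2"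
      and lift: "\<And>r k. bsearch f' eps c d r k \<Longrightarrow> bsearch f' eps a b r (Suc k)"
      by (rule gradient_bracket_halve) blast
    with Suc.prems(2) Suc.IH[of c d] obtain r k
      where "bsearch f' eps c d r k" "\<bar>f' r\<bar> < eps" "k \<le> n + 1"
      by auto
    then show ?thesis using lift by fastforce
  qed
qed

lemma bsearch3_succeeds:
  assumes smooth: "one_smooth f f'"
    and "descent_bracket f f' eps a b" and "b - a \<le> 2 * eps * 2 ^ n"
  shows "\<exists>r k. bsearch3 f f' eps a b r k \<and> \<bar>f' r\<bar> < eps \<and> k \<le> n + 1"
  using assms(2,3)
proof (induction n arbitrary: a b)
  case (0 a b)
  have "\<bar>f' ((a + b) / 2)\<bar> < eps"
  proof (rule ccontr)
    assume "\<not> \<bar>f' ((a + b) / 2)\<bar> < eps"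
    with "0.prems"(1) show False
    proof (cases rule: descent_bracket_halve)
      case (gradient c d)
      with gradient_bracket_width_ge[OF one_smooth_deriv_lipschitz[OF smooth]] "0.prems"(2)
      show False unfolding gradient_bracket_def by fastforce
    next
      case (descent c d)
      with descent_bracket_width_ge[OF smooth] "0.prems"(2)
      show False unfolding descent_bracket_def by fastforce
    qed
  qed
  then show ?case using bs3_found[where f=f and f'=f' and eps=eps, OF refl] by fastforce
next
  case (Suc n a b)
  show ?case
  proof (cases "\<bar>f' ((a + b) / 2)\<bar> < eps")
    case True
    then show ?thesis using bs3_found[where f=f and f'=f' and eps=eps, OF refl] by fastforce
  next
    case False
    with Suc.prems(1) show ?thesis
    proof (cases rule: descent_bracket_halve)
      case (gradient c d)
      with Suc.prems(2) bsearch_succeeds[OF smooth, of eps c d n] obtain r k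
        where "bsearch f' eps c d r k" "\<bar>f' r\<bar> < eps" "k \<le> n + 1"
        by auto
      with gradient(3) show ?thesis by fastforce
    next
      case (descent c d)
      with Suc.prems(2) Suc.IH[of c d] obtain r k
        where "bsearch3 f f' eps c d r k" "\<bar>f' r\<bar> < eps" "k \<le> n + 1"
        by auto
      with descent(3) show ?thesis by fastforce
    qed
  qed
qed

lemma pow2_exponent_bound:
  fixes x :: real
  assumes "x > 0"
  obtains n :: nat where "x \<le> 2 ^ n" "real n + 1 \<le> 2 * (1 + max 0 (ln x))"
proof
  define M where "M = max 0 (ln x)"
  define n where "n = nat \<lceil>2 * M\<rceil>"
  have "M \<ge> 0" unfolding M_def by simp
  then have "real n \<le> 2 * M + 1" unfolding n_def by linarith
  then show "real n + 1 \<le> 2 * (1 + max 0 (ln x))" unfolding M_def by simp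
  have "ln (2::real) \<ge> 1 / 2"
    using ln_le_minus_one[of "1 / 2 :: real"] by (simp add: ln_div)
  then have "real n / 2 \<le> real n * ln 2"
    using mult_left_mono[of "1 / 2" "ln 2" "real n"] by simp
  moreover have "M \<le> real n / 2" unfolding n_def by linarith
  ultimately have "x \<le> exp (real n * ln 2)"
    using \<open>x > 0\<close> unfolding M_def by (metis exp_ln exp_le_cancel_iff max.boundedE order_trans)
  then show "x \<le> 2 ^ n" by (simp add: exp_of_nat_mult)
qed

theorem lemmaA5:
  "\<exists>C::real. C > 0 \<and>
    (\<forall>(eps::real) (f::real \<Rightarrow> real) f' (xm::real) (xp::real).
       eps > 0 \<longrightarrow> one_smooth f f' \<longrightarrow> xm < xp \<longrightarrow> f' xm \<le> - eps \<longrightarrow> f xp \<ge> f xm \<longrightarrow>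
       (\<exists>r k. bsearch3 f f' eps xm xp r k \<and> \<bar>f' r\<bar> < eps \<and>
              real k \<le> C * (1 + max 0 (ln ((xp - xm) / eps)))))"
proof (rule exI[of _ 2], intro conjI allI impI)
  fix eps :: real and f f' :: "real \<Rightarrow> real" and xm xp :: real
  assume "eps > 0" "one_smooth f f'" "xm < xp" "f' xm \<le> - eps" "f xp \<ge> f xm"
  obtain n :: nat where "(xp - xm) / eps \<le> 2 ^ n"
    and n_bound: "real n + 1 \<le> 2 * (1 + max 0 (ln ((xp - xm) / eps)))"
    using pow2_exponent_bound[of "(xp - xm) / eps"] \<open>eps > 0\<close> \<open>xm < xp\<close> by auto
  then have "xp - xm \<le> eps * 2 ^ n"
    using \<open>eps > 0\<close> by (simp add: divide_le_eq mult.commute)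
  moreover have "0 \<le> eps * 2 ^ n"
    using \<open>eps > 0\<close> by simp
  ultimately have "xp - xm \<le> 2 * eps * 2 ^ n"
    by linarith
  moreover have "descent_bracket f f' eps xm xp"
    unfolding descent_bracket_def using \<open>xm < xp\<close> \<open>f' xm \<le> - eps\<close> \<open>f xp \<ge> f xm\<close> by simp
  ultimately obtain r k where "bsearch3 f f' eps xm xp r k" "\<bar>f' r\<bar> < eps" "k \<le> n + 1"
    using bsearch3_succeeds[OF \<open>one_smooth f f'\<close>] by blast
  with n_bound show "\<exists>r k. bsearch3 f f' eps xm xp r k \<and> \<bar>f' r\<bar> < eps \<and>
      real k \<le> 2 * (1 + max 0 (ln ((xp - xm) / eps)))"
    by (metis (mono_tags) of_nat_1 of_nat_add of_nat_le_iff order_trans)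
qed simp

end
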